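(* Let $m,g>0$ and $0<c<1$, and consider the hybrid system on $(x,y)\in T^*\mathbb{R}^+$: $$\dot x=\tfrac{1}{m}y,\quad \dot y=-mg\quad (x>0);\qquad (x,y)\mapsto(x,-c^2y)\quad (x=0,\ y<0).$$ For initial data $(x_0,y_0)$ with $x_0\ge 0$ (and $y_0>0$ if $x_0=0$) let $\zeta(x_0,y_0)$ be the Zeno time, i.e. the limit of the impact times: $$\zeta(x_0,y_0)=\frac{1}{mg}\Big(y_0+\sqrt{y_0^2+2m^2gx_0}\Big)+\frac{2c^2}{mg(1-c^2)}\sqrt{y_0^2+2m^2gx_0}.$$ Fix $y_0>0$ and consider the trajectory from $(0,y_0)$, with Zeno time $t_Z=\frac{2y_0}{mg(1-c^2)}$. Let $\Phi(t)$ be the state-transition matrix of the hybrid variational equation $\delta\dot z=A\,\delta z$ between impacts and $\delta z^+=J(y^-)\,\delta z^-$ at impacts, where $$A=\begin{bmatrix}0&1/m\\0&0\end{bmatrix},\qquad J(y)=\begin{bmatrix}-c^2&0\\-\frac{m^2g}{y}(1+c^2)&-c^2\end{bmatrix},$$ $y^-<0$ being the momentum just before the impact, and $\Phi(0)=I$. Then the limit $\Phi_Z=\lim_{t\nearrow t_Z}\Phi(t)$ exists and equals $$\Phi_Z=\begin{bmatrix}0&0\\ \frac{m^2g}{y_0}\frac{1+c^2}{1-c^2}&\frac{2}{1-c^2}\end{bmatrix},$$ so $\det\Phi_Z=0$, and moreover $\ker d\zeta_{(0,y_0)}=\ker\Phi_Z$ (both spanned by $(-2y_0,\ m^2g(1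+c^2))^\top$).
   Context: $J(y)$ is the saltation (hybrid Jacobian) matrix of the reset at the guard $x=0$. The product defining $\Phi$ multiplies successive factors on the left. *)

theory Defs
  imports "HOL-Analysis.Analysis"
begin

text \<open>Continuous flow of  x' = y/m, y' = -m g  for time s.\<close>
definition bb_flow :: "real \<Rightarrow> real \<Rightarrow> real \<Rightarrow> real \<times> real \<Rightarrow> real \<times> real" where
  "bb_flow m g s z = (fst z + snd z * s / m - g * s^2 / 2, snd z - m * g * s)"

definition bb_flight_time :: "real \<Rightarrow> real \<Rightarrow> real \<times> real \<Rightarrow> real" where
  "bb_flight_time m g z = Inf {s. 0 < s \<and> fst (bb_flow m g s z) = 0}"

definition bb_reset :: "real \<Rightarrow> real \<times> real \<Rightarrow> real \<times> real" where
  "bb_reset c z = (fst z, - (c^2) * snd z)"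

fun bb_state :: "real \<Rightarrow> real \<Rightarrow> real \<Rightarrow> real \<times> real \<Rightarrow> nat \<Rightarrow> real \<times> real" where
  "bb_state m g c z0 0 = z0"
| "bb_state m g c z0 (Suc k) =
     bb_reset c (bb_flow m g (bb_flight_time m g (bb_state m g c z0 k)) (bb_state m g c z0 k))"

fun bb_impact_time :: "real \<Rightarrow> real \<Rightarrow> real \<Rightarrow> real \<times> real \<Rightarrow> nat \<Rightarrow> real" where
  "bb_impact_time m g c z0 0 = 0"
| "bb_impact_time m g c z0 (Suc k) =
     bb_impact_time m g c z0 k + bb_flight_time m g (bb_state m g c z0 k)"

text \<open>Momentum y^- just before the (k+1)-th impact.\<close>
definition bb_pre_mom :: "real \<Rightarrow> real \<Rightarrow> real \<Rightarrow> real \<times> real \<Rightarrow> nat \<Rightarrow> real" where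
  "bb_pre_mom m g c z0 k =
     snd (bb_flow m g (bb_flight_time m g (bb_state m g c z0 k)) (bb_state m g c z0 k))"

text \<open>State-transition matrix exp(A s) of  \<delta>z' = A \<delta>z  with A = [[0,1/m],[0,0]].\<close>
definition bb_expA :: "real \<Rightarrow> real \<Rightarrow> real^2^2" where
  "bb_expA m s = vector [vector [1, s / m], vector [0, 1]]"

definition bb_J :: "real \<Rightarrow> real \<Rightarrow> real \<Rightarrow> real \<Rightarrow> real^2^2" where
  "bb_J m g c y = vector [vector [- (c^2), 0], vector [- (m^2 * g / y) * (1 + c^2), - (c^2)]]"

fun bb_M :: "real \<Rightarrow> real \<Rightarrow> real \<Rightarrow> real \<times> real \<Rightarrow> nat \<Rightarrow> real^2^2" where
  "bb_M m g c z0 0 = mat 1"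
| "bb_M m g c z0 (Suc k) =
     bb_J m g c (bb_pre_mom m g c z0 k) ** bb_expA m (bb_flight_time m g (bb_state m g c z0 k))
       ** bb_M m g c z0 k"

definition bb_Phi :: "real \<Rightarrow> real \<Rightarrow> real \<Rightarrow> real \<times> real \<Rightarrow> real \<Rightarrow> real^2^2" where
  "bb_Phi m g c z0 t =
     (let k = (SOME k. bb_impact_time m g c z0 k \<le> t \<and> t < bb_impact_time m g c z0 (Suc k))
      in bb_expA m (t - bb_impact_time m g c z0 k) ** bb_M m g c z0 k)"

text \<open>Zeno time as a function of the initial data (x0, y0) = (w$1, w$2).\<close>
definition bb_zeta :: "real \<Rightarrow> real \<Rightarrow> real \<Rightarrow> real^2 \<Rightarrow> real" where
  "bb_zeta m g c w =
     (1 / (m * g)) * (w$2 + sqrt ((w$2)^2 + 2 * m^2 * g * w$1))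
     + (2 * c^2 / (m * g * (1 - c^2))) * sqrt ((w$2)^2 + 2 * m^2 * g * w$1)"

end

theory Submission
  imports Defs
begin

text \<open>Started on the ground with momentum \<open>y0\<close>, the ball leaves the \<open>k\<close>-th impact with
  momentum \<open>q^k y0\<close>, \<open>q = c^2\<close>, and flies for \<open>2 q^k y0 / (m g)\<close>; so the impact times are
  partial sums of a geometric series converging to \<open>tZ\<close>. The transition matrix right after the
  \<open>k\<close>-th impact is a fixed polynomial matrix in \<open>p = q^k\<close> (one bounce maps \<open>p\<close> to \<open>q p\<close>).
  As \<open>t\<close> increases to \<open>tZ\<close> both \<open>p\<close> and the time elapsed since the last impact tend to \<open>0\<close>,
  so \<open>\<Phi>(t)\<close> tends to that matrix at \<open>p = 0\<close>, which is \<open>\<Phi>_Z\<close>. Its only nonzero row and the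
  derivative of \<open>\<zeta>\<close> are both multiples of the linear form \<open>m\<^sup>2 g (1 + q) v\<^sub>1 + 2 y0 v\<^sub>2\<close>.\<close>

abbreviation mat2 :: "real \<Rightarrow> real \<Rightarrow> real \<Rightarrow> real \<Rightarrow> real^2^2" where
  "mat2 a b c d \<equiv> vector [vector [a, b], vector [c, d]]"

lemma mat2_mult:
  "mat2 a b c d ** mat2 a' b' c' d' = mat2 (a*a' + b*c') (a*b' + b*d') (c*a' + d*c') (c*b' + d*d')"
  by (simp add: vec_eq_iff forall_2 matrix_matrix_mult_def sum_2)

lemma mat_1_eq_mat2: "(mat 1 :: real^2^2) = mat2 1 0 0 1"
  by (simp add: vec_eq_iff forall_2 mat_def)

lemma tendsto_vector2:
  assumes "(f1 \<longlongrightarrow> a1) F" "(f2 \<longlongrightarrow> a2) F"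
  shows "((\<lambda>t. vector [f1 t, f2 t] :: 'a::real_normed_vector^2) \<longlongrightarrow> vector [a1, a2]) F"
proof (rule vec_tendstoI)
  fix i :: 2
  show "((\<lambda>t. (vector [f1 t, f2 t] :: 'a^2) $ i) \<longlongrightarrow> (vector [a1, a2] :: 'a^2) $ i) F"
    using exhaust_2[of i] assms by auto
qed

lemma tendsto_mat2:
  assumes "(f1 \<longlongrightarrow> a1) F" "(f2 \<longlongrightarrow> a2) F" "(f3 \<longlongrightarrow> a3) F" "(f4 \<longlongrightarrow> a4) F"
  shows "((\<lambda>t. mat2 (f1 t) (f2 t) (f3 t) (f4 t)) \<longlongrightarrow> mat2 a1 a2 a3 a4) F"
  using assms by (intro tendsto_vector2)

lemma has_derivative_vec_nth [derivative_intros]: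
  "((\<lambda>x. x $ i) has_derivative (\<lambda>h. h $ i)) F"
  by (rule bounded_linear.has_derivative[OF bounded_linear_vec_nth has_derivative_ident])

lemma span_vector2_eq_kernel:
  fixes \<alpha> \<beta> :: real
  assumes "\<beta> \<noteq> 0"
  shows "span {vector [- \<beta>, \<alpha>] :: real^2} = {v. \<alpha> * v$1 + \<beta> * v$2 = 0}"
proof safe
  fix v :: "real^2"
  assume "v \<in> span {vector [- \<beta>, \<alpha>]}"
  then show "\<alpha> * v$1 + \<beta> * v$2 = 0"
    by (auto simp: span_singleton algebra_simps)
next
  fix v :: "real^2"
  assume "\<alpha> * v$1 + \<beta> * v$2 = 0"
  then have "v = (- v$1 / \<beta>) *\<^sub>R vector [- \<beta>, \<alpha>]"
    using assms by (simp add: vec_eq_iff forall_2 field_simps)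
  then show "v \<in> span {vector [- \<beta>, \<alpha>]}"
    by (metis span_base span_scale singletonI)
qed

lemma interval_index_exists:
  fixes T :: "nat \<Rightarrow> real"
  assumes "T \<longlonglongrightarrow> L" and "T 0 \<le> t" and "t < L"
  shows "\<exists>k. T k \<le> t \<and> t < T (Suc k)"
proof (rule ccontr)
  assume "\<nexists>k. T k \<le> t \<and> t < T (Suc k)"
  then have "T k \<le> t" for k
    using assms(2) by (induction k) (auto simp: not_less)
  then have "L \<le> t"
    using assms(1) by (intro LIMSEQ_le_const2) auto
  with assms(3) show False by simp
qed

lemma bb_flight_time_from_ground:
  assumes "m > 0" and "g > 0" and "y > 0"
  shows "bb_flight_time m g (0, y) = 2 * y / (m * g)"
proof -
  have "{s. 0 < s \<and> fst (bb_flow m g s (0, y)) = 0} = {2 * y / (m * g)}"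
  proof safe
    fix s assume s: "0 < s" "fst (bb_flow m g s (0, y)) = 0"
    then have "s * (y / m - g * s / 2) = 0"
      by (simp add: bb_flow_def power2_eq_square algebra_simps)
    with s assms show "s = 2 * y / (m * g)"
      by (simp add: field_simps)
  qed (use assms in \<open>simp_all add: bb_flow_def power2_eq_square field_simps\<close>)
  then show ?thesis
    by (simp add: bb_flight_time_def)
qed

lemma bb_state_from_ground:
  assumes "m > 0" and "g > 0" and "c \<noteq> 0" and "y0 > 0"
  shows "bb_state m g c (0, y0) k = (0, (c^2)^k * y0)"
proof (induction k)
  case (Suc k)
  have "(c^2)^k * y0 > 0"
    using assms by simp
  then show ?case
    using assms by (simp add: Suc bb_flight_time_from_ground bb_flow_def bb_reset_def
        power2_eq_square field_simps)
qed simp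

lemma bb_flight_time_state_from_ground:
  assumes "m > 0" and "g > 0" and "c \<noteq> 0" and "y0 > 0"
  shows "bb_flight_time m g (bb_state m g c (0, y0) k) = 2 * (c^2)^k * y0 / (m * g)"
proof -
  have "(c^2)^k * y0 > 0"
    using assms by simp
  from bb_flight_time_from_ground[OF assms(1,2) this] show ?thesis
    by (simp add: bb_state_from_ground[OF assms])
qed

lemma bb_pre_mom_from_ground:
  assumes "m > 0" and "g > 0" and "c \<noteq> 0" and "y0 > 0"
  shows "bb_pre_mom m g c (0, y0) k = - ((c^2)^k * y0)"
  using assms
  unfolding bb_pre_mom_def bb_flight_time_state_from_ground[OF assms]
  by (simp add: bb_state_from_ground bb_flow_def)

lemma bb_impact_time_from_ground:
  assumes "m > 0" and "g > 0" and "c \<noteq> 0" and "c^2 \<noteq> 1" and "y0 > 0"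
  shows "bb_impact_time m g c (0, y0) k = 2 * y0 / (m * g * (1 - c^2)) * (1 - (c^2)^k)"
proof (induction k)
  case (Suc k)
  have "1 - c^2 \<noteq> 0"
    using assms by simp
  then show ?case
    using assms by (simp add: Suc bb_flight_time_state_from_ground[OF assms(1-3,5)] field_simps)
qed simp

definition bounce_transition :: "real \<Rightarrow> real \<Rightarrow> real \<Rightarrow> real \<Rightarrow> real^2^2" where
  "bounce_transition a q y0 p = mat2
     (p * (2 * p - 1 - q) / (1 - q))          (2 * p * (p - 1) / (1 - q) * y0 / a)
     ((1 + q) * (1 - p) / (1 - q) * a / y0)   ((2 - (1 + q) * p) / (1 - q))"

lemma bounce_transition_step:
  fixes a q y0 p :: real
  assumes "a \<noteq> 0" and "y0 \<noteq> 0" and "p \<noteq> 0" and "q \<noteq> 1"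
  shows "mat2 (- q) 0 (a * (1 + q) / (p * y0)) (- q) ** mat2 1 (2 * p * y0 / a) 0 1
           ** bounce_transition a q y0 p = bounce_transition a q y0 (q * p)"
proof -
  \<comment> \<open>With \<open>d = 1 / (1 - q)\<close> the claim becomes a ring identity modulo \<open>(1 - q) d = 1\<close>.\<close>
  define d where "d = inverse (1 - q)"
  have d: "(1 - q) * d = 1"
    using assms by (simp add: d_def)
  have "\<And>x. x / (1 - q) = x * d"
    by (simp add: d_def divide_inverse)
  then show ?thesis
    using assms d unfolding bounce_transition_def mat2_mult
    by (simp add: vec_eq_iff forall_2) (simp add: field_simps; algebra)
qed

lemma bb_M_from_ground:
  assumes "m > 0" and "g > 0" and "c \<noteq> 0" and "c^2 \<noteq> 1" and "y0 > 0"
  shows "bb_M m g c (0, y0) k = bounce_transition (m^2 * g) (c^2) y0 ((c^2)^k)"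
proof (induction k)
  case 0
  show ?case
    using assms by (simp add: bounce_transition_def mat_1_eq_mat2)
next
  case (Suc k)
  have "bb_M m g c (0, y0) (Suc k) =
      mat2 (- (c^2)) 0 (m^2 * g * (1 + c^2) / ((c^2)^k * y0)) (- (c^2))
      ** mat2 1 (2 * (c^2)^k * y0 / (m^2 * g)) 0 1
      ** bounce_transition (m^2 * g) (c^2) y0 ((c^2)^k)"
    using assms by (simp add: Suc bb_J_def bb_expA_def bb_pre_mom_from_ground
        bb_flight_time_state_from_ground[OF assms(1-3,5)] power2_eq_square ac_simps)
  also have "\<dots> = bounce_transition (m^2 * g) (c^2) y0 ((c^2)^Suc k)"
    using assms by (simp add: bounce_transition_step)
  finally show ?case .
qed

lemma bb_impact_time_from_ground_LIMSEQ:
  assumes "m > 0" and "g > 0" and "0 < c" and "c < 1" and "y0 > 0"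
  shows "bb_impact_time m g c (0, y0) \<longlonglongrightarrow> 2 * y0 / (m * g * (1 - c^2))"
proof -
  have "c^2 < 1"
    using assms by (simp add: power_less_one_iff)
  have "(\<lambda>k. 2 * y0 / (m * g * (1 - c^2)) * (1 - (c^2)^k))
      \<longlonglongrightarrow> 2 * y0 / (m * g * (1 - c^2)) * (1 - 0)"
    by (intro tendsto_intros) (use \<open>c^2 < 1\<close> in simp)
  moreover have "bb_impact_time m g c (0, y0) = (\<lambda>k. 2 * y0 / (m * g * (1 - c^2)) * (1 - (c^2)^k))"
    using assms \<open>c^2 < 1\<close> by (intro ext bb_impact_time_from_ground) auto
  ultimately show ?thesis
    by simp
qed

lemma tendsto_expA_bounce_transition:
  assumes "(s \<longlongrightarrow> s0) F" and "(p \<longlongrightarrow> p0) F"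
  shows "((\<lambda>t. bb_expA m (s t) ** bounce_transition a q y0 (p t))
           \<longlongrightarrow> bb_expA m s0 ** bounce_transition a q y0 p0) F"
  unfolding bb_expA_def bounce_transition_def mat2_mult divide_inverse
  by (intro tendsto_mat2 tendsto_intros assms)

lemma bb_expA_0: "bb_expA m 0 = mat 1"
  by (simp add: bb_expA_def mat_1_eq_mat2)

lemma bb_Phi_from_ground_tendsto:
  assumes "m > 0" and "g > 0" and "0 < c" and "c < 1" and "y0 > 0"
  shows "(bb_Phi m g c (0, y0) \<longlongrightarrow> bounce_transition (m^2 * g) (c^2) y0 0)
           (at_left (2 * y0 / (m * g * (1 - c^2))))"
proof -
  define q where "q = c^2"
  define tZ where "tZ = 2 * y0 / (m * g * (1 - q))"
  define T where "T = bb_impact_time m g c (0, y0)"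
  \<comment> \<open>\<open>bb_Phi\<close> may pick any \<open>k\<close> with \<open>T k \<le> t < T (Suc k)\<close>; no uniqueness is needed.\<close>
  define K where "K t = (SOME k. T k \<le> t \<and> t < T (Suc k))" for t
  have q: "0 < q" "q < 1"
    using assms by (auto simp: q_def power_less_one_iff)
  have "tZ > 0"
    using assms q by (simp add: tZ_def)
  have T: "T k = tZ * (1 - q^k)" for k
    using assms q unfolding T_def tZ_def q_def by (intro bb_impact_time_from_ground) auto
  have K: "T (K t) \<le> t \<and> t < T (Suc (K t))" if "0 \<le> t" and "t < tZ" for t
    unfolding K_def
  proof (rule someI_ex, rule interval_index_exists)
    show "T \<longlonglongrightarrow> tZ"
      using bb_impact_time_from_ground_LIMSEQ[OF assms] by (simp add: T_def tZ_def q_def)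
  qed (use that in \<open>simp_all add: T_def\<close>)
  have bounds: "0 \<le> q^K t \<and> q^K t \<le> (tZ - t) / (tZ * q)
      \<and> 0 \<le> t - T (K t) \<and> t - T (K t) \<le> tZ * q^K t" if "0 \<le> t" and "t < tZ" for t
    using K[OF that] that q \<open>tZ > 0\<close> unfolding T by (simp add: field_simps)
  have near: "\<forall>\<^sub>F t in at_left tZ. 0 \<le> t \<and> t < tZ"
    using eventually_at_left_real[OF \<open>tZ > 0\<close>] by eventually_elim auto
  have P: "((\<lambda>t. q^K t) \<longlongrightarrow> 0) (at_left tZ)"
  proof (rule tendsto_sandwich[where f="\<lambda>_. 0" and h="\<lambda>t. (tZ - t) / (tZ * q)"])
    show "((\<lambda>t. (tZ - t) / (tZ * q)) \<longlongrightarrow> 0) (at_left tZ)"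
      using q \<open>tZ > 0\<close> by (intro tendsto_eq_intros) auto
  qed (use near bounds in \<open>auto elim: eventually_mono\<close>)
  have S: "((\<lambda>t. t - T (K t)) \<longlongrightarrow> 0) (at_left tZ)"
  proof (rule tendsto_sandwich[where f="\<lambda>_. 0" and h="\<lambda>t. tZ * q^K t"])
    show "((\<lambda>t. tZ * q^K t) \<longlongrightarrow> 0) (at_left tZ)"
      using tendsto_mult_right_zero[OF P] .
  qed (use near bounds in \<open>auto elim: eventually_mono\<close>)
  have "bb_Phi m g c (0, y0) = (\<lambda>t. bb_expA m (t - T (K t)) ** bounce_transition (m^2 * g) q y0 (q^K t))"
    using assms q unfolding bb_Phi_def Let_def T_def K_def q_def
    by (simp add: bb_M_from_ground)
  then show ?thesis
    using tendsto_expA_bounce_transition[OF S P, of m "m^2 * g" q y0]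
    by (simp add: bb_expA_0 tZ_def q_def)
qed

lemma bounce_transition_0_mult_eq_0_iff:
  assumes "q \<noteq> 1" and "y0 \<noteq> 0"
  shows "bounce_transition a q y0 0 *v v = 0 \<longleftrightarrow> a * (1 + q) * v$1 + 2 * y0 * v$2 = 0"
proof -
  have "bounce_transition a q y0 0 *v v = 0
      \<longleftrightarrow> (1 + q) / (1 - q) * a / y0 * v$1 + 2 / (1 - q) * v$2 = 0"
    by (simp add: bounce_transition_def vec_eq_iff forall_2 matrix_vector_mult_def sum_2)
  also have "(1 + q) / (1 - q) * a / y0 * v$1 + 2 / (1 - q) * v$2
      = (a * (1 + q) * v$1 + 2 * y0 * v$2) / (y0 * (1 - q))"
    using assms by (simp add: divide_simps eq_commute[of 1 q])
  also have "\<dots> = 0 \<longleftrightarrow> a * (1 + q) * v$1 + 2 * y0 * v$2 = 0"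
    using assms by (simp add: eq_commute[of 1 q])
  finally show ?thesis .
qed

lemma bb_zeta_from_ground:
  assumes "m > 0" and "g > 0" and "c^2 \<noteq> 1" and "y0 > 0"
  shows "bb_zeta m g c (vector [0, y0]) = 2 * y0 / (m * g * (1 - c^2))"
proof -
  have "1 - c^2 \<noteq> 0"
    using assms by simp
  then show ?thesis
    using assms by (simp add: bb_zeta_def field_simps)
qed

lemma bb_zeta_has_derivative_from_ground:
  assumes "m > 0" and "g > 0" and "c^2 \<noteq> 1" and "y0 > 0"
  shows "(bb_zeta m g c has_derivative
           (\<lambda>v. (m^2 * g * (1 + c^2) * v$1 + 2 * y0 * v$2) / (m * g * y0 * (1 - c^2))))
         (at (vector [0, y0]))"
proof -
  have "((\<lambda>w :: real^2. sqrt ((w$2)^2 + 2 * m^2 * g * w$1)) has_derivative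
      (\<lambda>v. (y0 * v$2 + m^2 * g * v$1) / y0)) (at (vector [0, y0]))"
    using assms by (auto intro!: derivative_eq_intros ext simp: field_simps)
  then show ?thesis
    unfolding bb_zeta_def[abs_def]
    using assms by (auto intro!: derivative_eq_intros ext simp: divide_simps eq_commute[of 1 "c^2"])
      (simp_all add: algebra_simps)
qed

theorem proposition6p7:
  fixes m g c y0 :: real
  assumes "m > 0" and "g > 0" and "0 < c" and "c < 1" and "y0 > 0"
  defines "tZ \<equiv> 2 * y0 / (m * g * (1 - c^2))"
      and "PhiZ \<equiv> vector [vector [0, 0],
                    vector [(m^2 * g / y0) * ((1 + c^2) / (1 - c^2)), 2 / (1 - c^2)]] :: real^2^2"
  shows "(bb_impact_time m g c (0, y0) \<longlonglongrightarrow> tZ)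
    \<and> (bb_zeta m g c (vector [0, y0]) = tZ)
    \<and> ((bb_Phi m g c (0, y0) \<longlongrightarrow> PhiZ) (at_left tZ))
    \<and> (det PhiZ = 0)
    \<and> (bb_zeta m g c differentiable (at (vector [0, y0])))
    \<and> (\<forall>D. (bb_zeta m g c has_derivative D) (at (vector [0, y0])) \<longrightarrow>
           {v. D v = 0} = {v. PhiZ *v v = 0}
         \<and> {v. D v = 0} = span {vector [- 2 * y0, m^2 * g * (1 + c^2)] :: real^2})"
proof -
  note pos = assms(1-5)
  have "c^2 \<noteq> 1"
    using pos by (simp add: power_less_one_iff less_imp_neq)
  note zeta_deriv = bb_zeta_has_derivative_from_ground[OF assms(1,2) this assms(5)]
  define kernel where "kernel = {v :: real^2. m^2 * g * (1 + c^2) * v$1 + 2 * y0 * v$2 = 0}"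
  have PhiZ: "PhiZ = bounce_transition (m^2 * g) (c^2) y0 0"
    by (simp add: PhiZ_def bounce_transition_def field_simps)
  have "{v. PhiZ *v v = 0} = kernel"
    using \<open>c^2 \<noteq> 1\<close> pos by (simp add: PhiZ kernel_def bounce_transition_0_mult_eq_0_iff)
  moreover have "span {vector [- 2 * y0, m^2 * g * (1 + c^2)] :: real^2} = kernel"
    using span_vector2_eq_kernel[of "2 * y0" "m^2 * g * (1 + c^2)"] pos by (simp add: kernel_def)
  moreover have "{v. D v = 0} = kernel"
    if "(bb_zeta m g c has_derivative D) (at (vector [0, y0]))" for D
    using has_derivative_unique[OF that zeta_deriv] \<open>c^2 \<noteq> 1\<close> pos by (auto simp: kernel_def)
  ultimately show ?thesis
    using bb_impact_time_from_ground_LIMSEQ[OF pos] bb_Phi_from_ground_tendsto[OF pos]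
      bb_zeta_from_ground[OF assms(1,2) \<open>c^2 \<noteq> 1\<close> assms(5)] differentiableI[OF zeta_deriv]
    by (simp add: tZ_def PhiZ det_2 bounce_transition_def)
qed

end
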